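(* Let the setting of the context hold, fix $x\in\mathcal{X}$, and assume $|g_t(z)|\le G$ for all $z$ and $t\in\{0,1\}$. Define $\epsilon_F(x):=\sum_t p(t\mid x)\,\epsilon_{F,t}(x)$ and $\epsilon_{CF}(x):=\sum_t p(1-t\mid x)\,\epsilon_{CF,t}(x)$. Then $$\epsilon_f(x)\le 2\big(G^2(\epsilon_F(x)+\epsilon_{CF}(x))-\mathbb{V}_Y(x)\big),$$ where $\mathbb{V}_Y(x):=\mathbb{E}_{q(z\mid x)}\sum_t\mathbb{E}_{p_{Y(t)\mid\mathbb{P}_t}(y\mid z)}(y-j_t(z))^2$.
   Context: Binary treatment $T\in\{0,1\}$, covariates $X\in\mathcal{X}$, real-valued potential outcomes $Y(t)$, observed $Y=Y(T)$, observational distribution $p(x,y,t)$, exchangeability $Y(t)\perp T\mid X$. Data generating assumption: $Y=f^*(\mathbb{M}(X),T)+e$ with $e$ zero-mean exogenous noise, and $\mathbb{E}(Y(t)\mid X)=j_t(\mathbb{P}_t(X))$ for functions $\mathbb{P}_t$ and injective $j_t$, where $Y(t)\perp X\mid\mathbb{P}_t(X)$; $p_{Y(t)\mid\mathbb{P}_t}(y\mid P)$ denotes the conditional density of $Y(t)$ given $\mathbb{P}_t(X)=P$. Let $f_t,g_t$ be functions of $z$ and $q_\phi(z\mid x,y,t)$ a conditional density; $q_t(z\mid x):=\mathbb{E}_{p(y\mid x,t)}q_\phi(z\mid x,y,t)$, $q(z\mid x):=\mathbb{E}_{p(y,t\mid x)}q_\phi(z\mid x,y,t)$. Define $\mathcal{L}_f(z,t):=g_t(z)^{-2}\int(y-f_t(z))^2p_{Y(t)\mid\mathbb{P}_t}(y\mid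 z)\,dy$, $\epsilon_{F,t}(x):=\mathbb{E}_{q_t(z\mid x)}\mathcal{L}_f(z,t)$, $\epsilon_{CF,t}(x):=\mathbb{E}_{q_{1-t}(z\mid x)}\mathcal{L}_f(z,t)$, and $\epsilon_f(x):=\mathbb{E}_{q(z\mid x)}\big((f_1(z)-f_0(z))-(j_1(z)-j_0(z))\big)^2$. *)

theory Defs
  imports "HOL-Analysis.Analysis"
begin

text \<open>Treatments are naturals t in {0,1}. The latent space is a measure
space M on a type 'z; all conditional densities over z are densities w.r.t. M, and all
densities over the real outcome y are densities w.r.t. lborel.
  pTX x t          = p(t | x)
  pYXT x t y       = p(y | x, t)
  qphi z x y t     = q_phi(z | x, y, t)
  pYP t z y        = p_{Y(t) | P_t}(y | z)\<close>

definition qt :: "('x \<Rightarrow> nat \<Rightarrow> real \<Rightarrow> real) \<Rightarrow> ('z \<Rightarrow> 'x \<Rightarrow> real \<Rightarrow> nat \<Rightarrow> real)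
    \<Rightarrow> 'x \<Rightarrow> nat \<Rightarrow> 'z \<Rightarrow> real" where
  "qt pYXT qphi x t z = (\<integral>y. pYXT x t y * qphi z x y t \<partial>lborel)"

text \<open>q(z|x) = E_{p(y,t|x)} q_phi(z|x,y,t) with p(y,t|x) = p(t|x) p(y|x,t).\<close>
definition qmix :: "('x \<Rightarrow> nat \<Rightarrow> real) \<Rightarrow> ('x \<Rightarrow> nat \<Rightarrow> real \<Rightarrow> real)
    \<Rightarrow> ('z \<Rightarrow> 'x \<Rightarrow> real \<Rightarrow> nat \<Rightarrow> real) \<Rightarrow> 'x \<Rightarrow> 'z \<Rightarrow> real" where
  "qmix pTX pYXT qphi x z = (\<Sum>t\<in>{0,1}. pTX x t * qt pYXT qphi x t z)"

definition Lf :: "(nat \<Rightarrow> 'z \<Rightarrow> real \<Rightarrow> real) \<Rightarrow> (nat \<Rightarrow> 'z \<Rightarrow> real) \<Rightarrow> (nat \<Rightarrow> 'z \<Rightarrow> real)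
    \<Rightarrow> 'z \<Rightarrow> nat \<Rightarrow> real" where
  "Lf pYP f g z t = inverse ((g t z)^2) * (\<integral>y. (y - f t z)^2 * pYP t z y \<partial>lborel)"

definition epsFt where
  "epsFt M pYXT qphi pYP f g x t = (\<integral>z. qt pYXT qphi x t z * Lf pYP f g z t \<partial>M)"

definition epsCFt where
  "epsCFt M pYXT qphi pYP f g x t = (\<integral>z. qt pYXT qphi x (1 - t) z * Lf pYP f g z t \<partial>M)"

definition epsf where
  "epsf M pTX pYXT qphi f j x =
     (\<integral>z. qmix pTX pYXT qphi x z * ((f 1 z - f 0 z) - (j 1 z - j 0 z))^2 \<partial>M)"

definition epsF where
  "epsF M pTX pYXT qphi pYP f g x = (\<Sum>t\<in>{0::nat,1}. pTX x t * epsFt M pYXT qphi pYP f g x t)"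

definition epsCF where
  "epsCF M pTX pYXT qphi pYP f g x = (\<Sum>t\<in>{0::nat,1}. pTX x (1 - t) * epsCFt M pYXT qphi pYP f g x t)"

definition VY where
  "VY M pTX pYXT qphi pYP j x =
     (\<integral>z. qmix pTX pYXT qphi x z *
          (\<Sum>t\<in>{0::nat,1}. (\<integral>y. (y - j t z)^2 * pYP t z y \<partial>lborel)) \<partial>M)"

end

theory Submission
  imports Defs
begin

text \<open>For fixed z and t, the bias-variance decomposition of the density of Y(t) given
\<open>P\<^sub>t = z\<close>, whose mean is \<open>j\<^sub>t(z)\<close>, gives
\<open>\<integral>(y - f\<^sub>t(z))\<^sup>2 = V\<^sub>t(z) + (f\<^sub>t(z) - j\<^sub>t(z))\<^sup>2\<close>; as \<open>g\<^sub>t(z)\<^sup>2 \<le> G\<^sup>2\<close>, this yields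
\<open>G\<^sup>2 L\<^sub>f(z,t) \<ge> V\<^sub>t(z) + (f\<^sub>t(z) - j\<^sub>t(z))\<^sup>2\<close>. Together with
\<open>(a - b)\<^sup>2 \<le> 2 (a\<^sup>2 + b\<^sup>2)\<close> for the two biases this bounds the integrand of \<open>\<epsilon>\<^sub>f\<close>
pointwise. Integrating against \<open>q(z|x) = \<Sum>\<^sub>t p(t|x) q\<^sub>t(z|x)\<close>, the four terms
\<open>p(t'|x) q\<^sub>t\<^sub>'(z|x) L\<^sub>f(z,t)\<close> regroup into the factual (t' = t) and counterfactual
(t' = 1 - t) losses.\<close>

lemma integral_square_deviation_eq_variance_plus_bias:
  fixes M :: "real measure" and p :: "real \<Rightarrow> real"
  assumes "integrable M p" and "(\<integral>y. p y \<partial>M) = 1"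
    and "integrable M (\<lambda>y. y * p y)" and "(\<integral>y. y * p y \<partial>M) = m"
    and "integrable M (\<lambda>y. y^2 * p y)"
  shows "(\<integral>y. (y - c)^2 * p y \<partial>M) = (\<integral>y. (y - m)^2 * p y \<partial>M) + (c - m)^2"
proof -
  have expand: "(\<integral>y. (y - a)^2 * p y \<partial>M) = (\<integral>y. y^2 * p y \<partial>M) - 2 * a * m + a^2" for a
  proof -
    have "(\<lambda>y. (y - a)^2 * p y) = (\<lambda>y. (y^2 * p y - (2 * a) * (y * p y)) + a^2 * p y)"
      by (auto simp: power2_eq_square algebra_simps)
    then show ?thesis
      using assms by (simp add: integral_add integral_diff)
  qed
  show ?thesis
    unfolding expand[of c] expand[of m] by (simp add: power2_eq_square algebra_simps)
qed

lemma square_diff_le_twice_sum_squares: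
  fixes a b :: real
  shows "(a - b)^2 \<le> 2 * (a^2 + b^2)"
  using zero_le_power2[of "a + b"] by (simp add: power2_eq_square algebra_simps)

lemma le_square_bound_mult_inverse_square:
  fixes I g G :: real
  assumes "0 \<le> I" and "g \<noteq> 0" and "\<bar>g\<bar> \<le> G"
  shows "I \<le> G^2 * (inverse (g^2) * I)"
proof -
  have "g^2 \<le> G^2"
    using assms(3) by (metis abs_ge_zero power2_abs power_mono)
  have "I = g^2 * (inverse (g^2) * I)"
    using assms(2) by simp
  also have "\<dots> \<le> G^2 * (inverse (g^2) * I)"
    using \<open>g^2 \<le> G^2\<close> assms(1) by (intro mult_right_mono) auto
  finally show ?thesis .
qed

lemma Lf_lower_bound:
  assumes density: "\<forall>y. pYP t z y \<ge> 0" "integrable lborel (pYP t z)"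
      "(\<integral>y. pYP t z y \<partial>lborel) = 1" "integrable lborel (\<lambda>y. y^2 * pYP t z y)"
    and mean: "integrable lborel (\<lambda>y. y * pYP t z y)" "(\<integral>y. y * pYP t z y \<partial>lborel) = j t z"
    and g: "g t z \<noteq> 0" "\<bar>g t z\<bar> \<le> G"
  shows "(\<integral>y. (y - j t z)^2 * pYP t z y \<partial>lborel) + (f t z - j t z)^2 \<le> G^2 * Lf pYP f g z t"
proof -
  have "(\<integral>y. (y - f t z)^2 * pYP t z y \<partial>lborel)
      = (\<integral>y. (y - j t z)^2 * pYP t z y \<partial>lborel) + (f t z - j t z)^2"
    using density mean by (intro integral_square_deviation_eq_variance_plus_bias) auto
  moreover have "0 \<le> (\<integral>y. (y - f t z)^2 * pYP t z y \<partial>lborel)"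
    using density(1) by (intro integral_nonneg_AE) auto
  ultimately show ?thesis
    unfolding Lf_def using le_square_bound_mult_inverse_square[OF _ g] by metis
qed

lemma effect_error_square_le_Lf_sum:
  assumes "\<And>t. t \<in> {0,1} \<Longrightarrow>
    (\<integral>y. (y - j t z)^2 * pYP t z y \<partial>lborel) + (f t z - j t z)^2 \<le> G^2 * Lf pYP f g z t"
  shows "((f 1 z - f 0 z) - (j 1 z - j 0 z))^2
    \<le> 2 * (G^2 * (Lf pYP f g z 0 + Lf pYP f g z 1)
             - (\<Sum>t\<in>{0::nat,1}. \<integral>y. (y - j t z)^2 * pYP t z y \<partial>lborel))"
proof -
  have "((f 1 z - f 0 z) - (j 1 z - j 0 z))^2 \<le> 2 * ((f 1 z - j 1 z)^2 + (f 0 z - j 0 z)^2)"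
    using square_diff_le_twice_sum_squares[of "f 1 z - j 1 z" "f 0 z - j 0 z"]
    by (simp add: algebra_simps)
  then show ?thesis
    using assms[of 0] assms[of 1] by (simp add: algebra_simps)
qed

lemma qt_nonneg:
  assumes "\<forall>y. pYXT x t y \<ge> 0" and "\<forall>y. qphi z x y t \<ge> 0"
  shows "qt pYXT qphi x t z \<ge> 0"
  unfolding qt_def using assms by (intro integral_nonneg_AE) auto

lemma qmix_nonneg:
  assumes "\<forall>t\<in>{0,1}. pTX x t \<ge> 0" and "\<forall>t\<in>{0,1}. qt pYXT qphi x t z \<ge> 0"
  shows "qmix pTX pYXT qphi x z \<ge> 0"
  unfolding qmix_def using assms by (intro sum_nonneg) auto

lemma qmix_mult_Lf_sum_eq:
  "qmix pTX pYXT qphi x z * (Lf pYP f g z 0 + Lf pYP f g z 1)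
    = (pTX x 0 * (qt pYXT qphi x 0 z * Lf pYP f g z 0) + pTX x 1 * (qt pYXT qphi x 1 z * Lf pYP f g z 1))
    + (pTX x 1 * (qt pYXT qphi x 1 z * Lf pYP f g z 0) + pTX x 0 * (qt pYXT qphi x 0 z * Lf pYP f g z 1))"
  unfolding qmix_def by (simp add: algebra_simps)

lemma integrable_qmix_Lf:
  assumes "\<forall>t\<in>{0,1}. \<forall>t'\<in>{0,1}. integrable M (\<lambda>z. qt pYXT qphi x t' z * Lf pYP f g z t)"
  shows "integrable M (\<lambda>z. qmix pTX pYXT qphi x z * (Lf pYP f g z 0 + Lf pYP f g z 1))"
  using assms unfolding qmix_mult_Lf_sum_eq by simp

lemma integral_qmix_Lf_eq_epsF_plus_epsCF:
  assumes "\<forall>t\<in>{0,1}. \<forall>t'\<in>{0,1}. integrable M (\<lambda>z. qt pYXT qphi x t' z * Lf pYP f g z t)"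
  shows "(\<integral>z. qmix pTX pYXT qphi x z * (Lf pYP f g z 0 + Lf pYP f g z 1) \<partial>M)
    = epsF M pTX pYXT qphi pYP f g x + epsCF M pTX pYXT qphi pYP f g x"
  using assms unfolding qmix_mult_Lf_sum_eq epsF_def epsCF_def epsFt_def epsCFt_def by simp

theorem lemma3:
  fixes M :: "'z measure" and x :: 'x
    and pTX :: "'x \<Rightarrow> nat \<Rightarrow> real"
    and pYXT :: "'x \<Rightarrow> nat \<Rightarrow> real \<Rightarrow> real"
    and qphi :: "'z \<Rightarrow> 'x \<Rightarrow> real \<Rightarrow> nat \<Rightarrow> real"
    and pYP :: "nat \<Rightarrow> 'z \<Rightarrow> real \<Rightarrow> real"
    and f g j :: "nat \<Rightarrow> 'z \<Rightarrow> real" and G :: real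
  assumes pT_nonneg: "\<forall>t\<in>{0,1}. pTX x t \<ge> 0"
    and pT_sum: "pTX x 0 + pTX x 1 = 1"
    and pYXT_density: "\<forall>t\<in>{0,1}. (\<forall>y. pYXT x t y \<ge> 0) \<and> integrable lborel (pYXT x t)
                          \<and> (\<integral>y. pYXT x t y \<partial>lborel) = 1"
    and qphi_density: "\<forall>t\<in>{0,1}. \<forall>y. (\<forall>z\<in>space M. qphi z x y t \<ge> 0)
                          \<and> integrable M (\<lambda>z. qphi z x y t) \<and> (\<integral>z. qphi z x y t \<partial>M) = 1"
    and pYP_density: "\<forall>t\<in>{0,1}. \<forall>z\<in>space M. (\<forall>y. pYP t z y \<ge> 0)
                          \<and> integrable lborel (pYP t z) \<and> (\<integral>y. pYP t z y \<partial>lborel) = 1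
                          \<and> integrable lborel (\<lambda>y. y^2 * pYP t z y)"
    and pYP_mean: "\<forall>t\<in>{0,1}. \<forall>z\<in>space M. integrable lborel (\<lambda>y. y * pYP t z y)
                          \<and> (\<integral>y. y * pYP t z y \<partial>lborel) = j t z"
    and j_inj: "\<forall>t\<in>{0,1}. inj_on (j t) (space M)"
    and g_bound: "\<forall>t\<in>{0,1}. \<forall>z. \<bar>g t z\<bar> \<le> G"
    and g_nonzero: "\<forall>t\<in>{0,1}. \<forall>z. g t z \<noteq> 0"
    and int_L: "\<forall>t\<in>{0,1}. \<forall>t'\<in>{0,1}.
                  integrable M (\<lambda>z. qt pYXT qphi x t' z * Lf pYP f g z t)"
    and int_V: "integrable M (\<lambda>z. qmix pTX pYXT qphi x z *
                  (\<Sum>t\<in>{0::nat,1}. (\<integral>y. (y - j t z)^2 * pYP t z y \<partial>lborel)))"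
    and int_f: "integrable M (\<lambda>z. qmix pTX pYXT qphi x z *
                  ((f 1 z - f 0 z) - (j 1 z - j 0 z))^2)"
  shows "epsf M pTX pYXT qphi f j x
           \<le> 2 * (G^2 * (epsF M pTX pYXT qphi pYP f g x + epsCF M pTX pYXT qphi pYP f g x)
                  - VY M pTX pYXT qphi pYP j x)"
proof -
  let ?Q = "qmix pTX pYXT qphi x"
  let ?L = "\<lambda>z. Lf pYP f g z 0 + Lf pYP f g z 1"
  let ?V = "\<lambda>z. \<Sum>t\<in>{0::nat,1}. \<integral>y. (y - j t z)^2 * pYP t z y \<partial>lborel"
  let ?D = "\<lambda>z. ((f 1 z - f 0 z) - (j 1 z - j 0 z))^2"
  have pointwise: "?D z \<le> 2 * (G^2 * ?L z - ?V z)" if "z \<in> space M" for z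
    using that pYP_density pYP_mean g_bound g_nonzero
    by (intro effect_error_square_le_Lf_sum Lf_lower_bound) auto
  have Q_nonneg: "?Q z \<ge> 0" if "z \<in> space M" for z
    using that pT_nonneg pYXT_density qphi_density by (intro qmix_nonneg ballI qt_nonneg) auto
  have int_QL: "integrable M (\<lambda>z. ?Q z * ?L z)"
    using int_L by (rule integrable_qmix_Lf)
  have "epsf M pTX pYXT qphi f j x = (\<integral>z. ?Q z * ?D z \<partial>M)"
    unfolding epsf_def ..
  also have "\<dots> \<le> (\<integral>z. 2 * (G^2 * (?Q z * ?L z) - ?Q z * ?V z) \<partial>M)"
  proof (intro integral_mono)
    fix z assume "z \<in> space M"
    then show "?Q z * ?D z \<le> 2 * (G^2 * (?Q z * ?L z) - ?Q z * ?V z)"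
      using mult_left_mono[OF pointwise Q_nonneg] by (simp add: algebra_simps)
  qed (use int_f int_QL int_V in auto)
  also have "\<dots> = 2 * (G^2 * (\<integral>z. ?Q z * ?L z \<partial>M) - (\<integral>z. ?Q z * ?V z \<partial>M))"
    using int_QL int_V by simp
  also have "\<dots> = 2 * (G^2 * (epsF M pTX pYXT qphi pYP f g x + epsCF M pTX pYXT qphi pYP f g x)
                  - VY M pTX pYXT qphi pYP j x)"
    unfolding integral_qmix_Lf_eq_epsF_plus_epsCF[OF int_L] VY_def ..
  finally show ?thesis .
qed

end
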